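(* Let $f:\mathbb{R}^d\to\mathbb{R}$ be differentiable with $f^*:=\inf_\theta f(\theta)>-\infty$ and $\delta(\theta):=f(\theta)-f^*$. Let $\xi\in(-\infty,1/2]$ and $L_0,L_1\ge0$ (not both zero). Suppose $f$ satisfies N\L{} with coefficient $C(\cdot)$ and degree $\xi$, and NS with a function $\beta(\cdot)$ satisfying $\beta(\theta)\le L_0\frac{\|\nabla f(\theta)\|_2^2}{\delta(\theta)^{2-2\xi}}+L_1\|\nabla f(\theta)\|_2$ whenever $\delta(\theta)>0$. Run GNGD $\theta_{t+1}=\theta_t-\frac{\nabla f(\theta_t)}{\beta(\theta_t)}$ from $\theta_1$, assume $\delta(\theta_t)>0$ and $\nabla f(\theta_t)\neq0$ for all $t$, and assume $C:=\inf_{t\ge1}C(\theta_t)>0$. Let $a:=\frac{1}{2}\Big(L_0+\frac{L_1\,\delta(\theta_1)^{1-\xi}}{C}\Big)^{-1}$. Then $\delta(\theta_{t+1})\le\delta(\theta_t)$ for all $t$, and: (i) if $\xi<1/2$, then for all $t\ge1$, $\delta(\theta_t)\le\big[\delta(\theta_1)^{-(1-2\xi)}+(1-2\xi)\,a\,(t-1)\big]^{-\frac{1}{1-2\xi}}$; (ii) if $\xi=1/2$, then for all $t\ge1$, $\delta(\theta_t)\le\exp\Big\{-\frac{C\,(t-1)}{2\,(L_0C+L_1\delta(\theta_1)^{1/2})}\Big\}\,\delta(\theta_1)$.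
   Context: Non-uniform smoothness (NS): a differentiable $f:\mathbb{R}^d\to\mathbb{R}$ satisfies NS with a function $\beta:\mathbb{R}^d\to(0,\infty)$ if for all $\theta,\theta'\in\mathbb{R}^d$, $\big|f(\theta')-f(\theta)-\langle\nabla f(\theta),\theta'-\theta\rangle\big|\le\frac{\beta(\theta)}{2}\|\theta'-\theta\|_2^2$. Non-uniform \L{}ojasiewicz (N\L{}) inequality: $f$ satisfies N\L{} with coefficient $C:\mathbb{R}^d\to(0,\infty)$ and degree $\xi\in(-\infty,1]$ if $\|\nabla f(\theta)\|_2\ge C(\theta)\,|f(\theta)-f^*|^{1-\xi}$ for all $\theta$, where $f^*=\inf_\theta f(\theta)$. *)

theory Defs
  imports "HOL-Analysis.Analysis"
begin

text \<open>The gradient of f is passed explicitly as a function g, with the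
hypothesis that g x is the gradient of f at x (GDERIV).\<close>

definition fstar :: "('a \<Rightarrow> real) \<Rightarrow> real" where
  "fstar f = Inf (range f)"

definition NS :: "('a::real_inner \<Rightarrow> real) \<Rightarrow> ('a \<Rightarrow> 'a) \<Rightarrow> ('a \<Rightarrow> real) \<Rightarrow> bool" where
  "NS f g \<beta> \<longleftrightarrow> (\<forall>\<theta>. \<beta> \<theta> > 0) \<and>
     (\<forall>\<theta> \<theta>'. \<bar>f \<theta>' - f \<theta> - inner (g \<theta>) (\<theta>' - \<theta>)\<bar> \<le> \<beta> \<theta> / 2 * (norm (\<theta>' - \<theta>))\<^sup>2)"

definition NL :: "('a::real_inner \<Rightarrow> real) \<Rightarrow> ('a \<Rightarrow> 'a) \<Rightarrow> ('a \<Rightarrow> real) \<Rightarrow> real \<Rightarrow> bool" where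
  "NL f g C \<xi> \<longleftrightarrow> \<xi> \<le> 1 \<and> (\<forall>\<theta>. C \<theta> > 0) \<and>
     (\<forall>\<theta>. norm (g \<theta>) \<ge> C \<theta> * \<bar>f \<theta> - fstar f\<bar> powr (1 - \<xi>))"

end

theory Submission
  imports Defs
begin

text \<open>Smoothness applied at the GNGD step gives the descent
  \<open>\<delta>(\<theta>\<^sub>t\<^sub>+\<^sub>1) \<le> \<delta>(\<theta>\<^sub>t) - \<parallel>\<nabla>f(\<theta>\<^sub>t)\<parallel>\<^sup>2 / (2\<beta>(\<theta>\<^sub>t))\<close>. The bound on \<open>\<beta>\<close>, the
  Lojasiewicz inequality \<open>\<parallel>\<nabla>f\<parallel> \<ge> C \<delta>\<^bsup>1-\<xi>\<^esup>\<close> and the monotonicity \<open>\<delta>(\<theta>\<^sub>t) \<le> \<delta>(\<theta>\<^sub>1)\<close>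
  turn the decrease into at least \<open>a \<delta>(\<theta>\<^sub>t)\<^bsup>2-2\<xi>\<^esup>\<close>. The scalar recursion
  \<open>\<delta>\<^sub>t\<^sub>+\<^sub>1 \<le> \<delta>\<^sub>t - a \<delta>\<^sub>t\<^bsup>1+p\<^esup>\<close> with \<open>p = 1 - 2\<xi>\<close> increases \<open>\<delta>\<^sub>t\<^bsup>-p\<^esup>\<close> by at least
  \<open>p a\<close> per step, which gives the rate for \<open>\<xi> < 1/2\<close>; for \<open>\<xi> = 1/2\<close> it is the linear
  contraction \<open>\<delta>\<^sub>t\<^sub>+\<^sub>1 \<le> (1 - a) \<delta>\<^sub>t \<le> e\<^sup>-\<^sup>a \<delta>\<^sub>t\<close>.\<close>

lemma powr_neg_gain_of_decrease:
  fixes d d' a p :: real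
  assumes d: "d > 0" and d': "d' > 0" and p: "p > 0"
    and decrease: "d' \<le> d - a * d powr (1 + p)"
  shows "d powr (-p) + p * a \<le> d' powr (-p)"
proof -
  define x where "x = a * d powr p"
  have d'_le: "d' \<le> d * (1 - x)"
    using decrease d by (simp add: x_def powr_add algebra_simps)
  then have "d * (1 - x) > 0"
    using d' by linarith
  then have x_lt_1: "x < 1"
    using d by (simp add: zero_less_mult_iff)
  have "1 + p * x \<le> exp (p * x)"
    by (rule exp_ge_add_one_self)
  also have "\<dots> \<le> exp (-p * ln (1 - x))"
    using mult_left_mono[of "ln (1 - x)" "-x" p] ln_le_minus_one[of "1 - x"] x_lt_1 p by simp
  also have "\<dots> = (1 - x) powr (-p)"
    using x_lt_1 by (simp add: powr_def)
  finally have gain: "1 + p * x \<le> (1 - x) powr (-p)" .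
  have "d powr (-p) + p * a = d powr (-p) * (1 + p * x)"
    using d by (simp add: x_def powr_minus field_simps)
  also have "\<dots> \<le> d powr (-p) * (1 - x) powr (-p)"
    using gain by (simp add: mult_left_mono)
  also have "\<dots> = (d * (1 - x)) powr (-p)"
    using d x_lt_1 by (simp add: powr_mult)
  also have "\<dots> \<le> d' powr (-p)"
    using powr_mono2'[of "-p" d' "d * (1 - x)"] p d' d'_le by simp
  finally show ?thesis .
qed

lemma polynomial_decrease_rate:
  fixes d :: "nat \<Rightarrow> real" and a p :: real
  assumes pos: "\<And>t. t \<ge> 1 \<Longrightarrow> d t > 0"
    and decrease: "\<And>t. t \<ge> 1 \<Longrightarrow> d (Suc t) \<le> d t - a * d t powr (1 + p)"
    and a: "a > 0" and p: "p > 0" and t: "t \<ge> 1"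
  shows "d t \<le> (d 1 powr (-p) + p * a * (real t - 1)) powr (-(1/p))"
proof -
  have gain: "d 1 powr (-p) + p * a * (real t - 1) \<le> d t powr (-p)"
    using t
  proof (induction t rule: dec_induct)
    case (step n)
    then have "d n powr (-p) + p * a \<le> d (Suc n) powr (-p)"
      using powr_neg_gain_of_decrease pos decrease p by simp
    with step.IH show ?case
      by (simp add: algebra_simps)
  qed simp
  have "0 < d 1 powr (-p) + p * a * (real t - 1)"
    using t a p pos[of 1] by (simp add: add_pos_nonneg)
  then have "(d t powr (-p)) powr (-(1/p)) \<le> (d 1 powr (-p) + p * a * (real t - 1)) powr (-(1/p))"
    using powr_mono2' gain p by simp
  then show ?thesis
    using p pos[OF t] by (simp add: powr_powr)
qed

lemma geometric_decrease_rate: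
  fixes d :: "nat \<Rightarrow> real" and a :: real
  assumes pos: "\<And>t. t \<ge> 1 \<Longrightarrow> d t > 0"
    and decrease: "\<And>t. t \<ge> 1 \<Longrightarrow> d (Suc t) \<le> d t - a * d t"
    and t: "t \<ge> 1"
  shows "d t \<le> exp (-(a * (real t - 1))) * d 1"
  using t
proof (induction t rule: dec_induct)
  case (step n)
  have "d (Suc n) \<le> (1 - a) * d n"
    using decrease[OF step.hyps(1)] by (simp add: left_diff_distrib)
  also have "\<dots> \<le> exp (-a) * d n"
    using exp_ge_add_one_self[of "-a"] pos[OF step.hyps(1)] by (simp add: mult_right_mono)
  also have "\<dots> \<le> exp (-a) * (exp (-(a * (real n - 1))) * d 1)"
    using step.IH by simp
  also have "\<dots> = exp (-(a * (real (Suc n) - 1))) * d 1"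
  proof -
    have "-(a * (real (Suc n) - 1)) = -a + -(a * (real n - 1))"
      by (simp add: algebra_simps)
    then show ?thesis
      by (simp only: exp_add mult.assoc)
  qed
  finally show ?case .
qed simp

lemma NS_normalized_step_descent:
  fixes f :: "'a::real_inner \<Rightarrow> real"
  assumes "NS f g \<beta>"
  shows "f (x - (1 / \<beta> x) *\<^sub>R g x) \<le> f x - (norm (g x))\<^sup>2 / (2 * \<beta> x)"
proof -
  define y where "y = x - (1 / \<beta> x) *\<^sub>R g x"
  have b: "\<beta> x > 0" and smooth: "\<bar>f y - f x - inner (g x) (y - x)\<bar> \<le> \<beta> x / 2 * (norm (y - x))\<^sup>2"
    using assms unfolding NS_def by auto
  have "y - x = (- (1 / \<beta> x)) *\<^sub>R g x"
    by (simp add: y_def)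
  then have inner_step: "inner (g x) (y - x) = - ((norm (g x))\<^sup>2 / \<beta> x)"
    and norm_step: "(norm (y - x))\<^sup>2 = (norm (g x))\<^sup>2 / (\<beta> x)\<^sup>2"
    using b by (simp_all add: dot_square_norm power_divide)
  have "f y \<le> f x - (norm (g x))\<^sup>2 / \<beta> x + \<beta> x / 2 * ((norm (g x))\<^sup>2 / (\<beta> x)\<^sup>2)"
    using abs_le_D1[OF smooth] unfolding inner_step norm_step by linarith
  also have "\<dots> = f x - (norm (g x))\<^sup>2 / (2 * \<beta> x)"
    using b by (simp add: field_simps power2_eq_square)
  finally show ?thesis
    by (simp add: y_def)
qed

lemma add_mult_pos_of_not_both_zero:
  fixes L0 L1 r :: real
  assumes "L0 \<ge> 0" "L1 \<ge> 0" "\<not> (L0 = 0 \<and> L1 = 0)" "r > 0"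
  shows "L0 + L1 * r > 0"
  using assms by (metis add_nonneg_pos add_pos_nonneg less_eq_real_def mult_pos_pos mult_zero_left)

lemma gradient_ratio_lower_bound:
  fixes G b q q1 c L0 L1 :: real
  assumes b: "b > 0" and q: "q > 0" "q \<le> q1" and c: "c > 0" "c * q \<le> G"
    and L: "L1 \<ge> 0" "L0 + L1 * q1 / c > 0"
    and b_le: "b \<le> L0 * G\<^sup>2 / q\<^sup>2 + L1 * G"
  shows "q\<^sup>2 / (2 * (L0 + L1 * q1 / c)) \<le> G\<^sup>2 / (2 * b)"
proof -
  define K where "K = L0 + L1 * q1 / c"
  have G: "G > 0"
    using mult_pos_pos[OF c(1) q(1)] c(2) by linarith
  have "c * q\<^sup>2 \<le> G * q1"
    using mult_mono[OF c(2) q(2)] q G by (simp add: power2_eq_square mult.assoc)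
  then have "L1 * (G * q\<^sup>2) \<le> L1 * (q1 / c * G\<^sup>2)"
    using c G L(1) by (intro mult_left_mono) (auto simp: field_simps power2_eq_square)
  moreover have "b * q\<^sup>2 \<le> L0 * G\<^sup>2 + L1 * G * q\<^sup>2"
    using mult_right_mono[OF b_le, of "q\<^sup>2"] q by (simp add: distrib_right)
  ultimately have "b * q\<^sup>2 \<le> K * G\<^sup>2"
    by (simp add: K_def algebra_simps)
  then have "q\<^sup>2 / (2 * K) \<le> G\<^sup>2 / (2 * b)"
    using b L(2)[folded K_def] by (simp add: divide_le_eq le_divide_eq mult.commute mult.left_commute)
  then show ?thesis
    by (simp add: K_def)
qed

lemma GNGD_step_decrease:
  fixes f :: "'a::real_inner \<Rightarrow> real"
  assumes NL: "NL f g C \<xi>" and NS: "NS f g \<beta>"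
    and gap: "f x - fstar f > 0" "f x - fstar f \<le> D"
    and c: "c > 0" "c \<le> C x"
    and L: "L0 \<ge> 0" "L1 \<ge> 0" "\<not> (L0 = 0 \<and> L1 = 0)"
    and beta_bound: "\<beta> x \<le> L0 * (norm (g x))\<^sup>2 / (f x - fstar f) powr (2 - 2 * \<xi>) + L1 * norm (g x)"
  shows "f (x - (1 / \<beta> x) *\<^sub>R g x) - fstar f
    \<le> f x - fstar f - (f x - fstar f) powr (2 - 2 * \<xi>) / (2 * (L0 + L1 * D powr (1 - \<xi>) / c))"
proof -
  define q where "q = (f x - fstar f) powr (1 - \<xi>)"
  have xi: "\<xi> \<le> 1" and b: "\<beta> x > 0"
    using NL NS unfolding NL_def NS_def by auto
  have grad_ge: "C x * q \<le> norm (g x)"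
    using NL gap(1) unfolding NL_def q_def by (metis abs_of_pos)
  have q: "q > 0" "q \<le> D powr (1 - \<xi>)"
    using gap xi by (auto simp: q_def powr_mono2)
  have q_sq: "(f x - fstar f) powr (2 - 2 * \<xi>) = q\<^sup>2"
    using gap(1) by (simp add: q_def power2_eq_square powr_add[symmetric])
  have "D powr (1 - \<xi>) / c > 0"
    using order_less_le_trans[OF q] c by simp
  from add_mult_pos_of_not_both_zero[OF L this]
  have "0 < L0 + L1 * D powr (1 - \<xi>) / c"
    by simp
  moreover have "c * q \<le> norm (g x)"
    using mult_right_mono[OF c(2) less_imp_le[OF q(1)]] grad_ge by linarith
  ultimately have "q\<^sup>2 / (2 * (L0 + L1 * D powr (1 - \<xi>) / c)) \<le> (norm (g x))\<^sup>2 / (2 * \<beta> x)"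
    using gradient_ratio_lower_bound b q c L beta_bound q_sq by simp
  then show ?thesis
    using NS_normalized_step_descent[OF NS, of x] q_sq by simp
qed

lemma GNGD_descent:
  assumes NS: "NS f g \<beta>"
    and GNGD: "\<theta> (Suc t) = \<theta> t - (1 / \<beta> (\<theta> t)) *\<^sub>R g (\<theta> t)"
  shows "f (\<theta> (Suc t)) \<le> f (\<theta> t)"
proof -
  have "(norm (g (\<theta> t)))\<^sup>2 / (2 * \<beta> (\<theta> t)) \<ge> 0"
    using NS by (simp add: NS_def less_imp_le)
  then show ?thesis
    using NS_normalized_step_descent[OF NS, of "\<theta> t"] GNGD by simp
qed

lemma GNGD_gap_recursion:
  fixes f :: "'a::real_inner \<Rightarrow> real" and C :: "'a \<Rightarrow> real" and \<theta> :: "nat \<Rightarrow> 'a"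
  defines "\<delta> \<equiv> \<lambda>x. f x - fstar f"
    and "Cinf \<equiv> INF t\<in>{1..}. C (\<theta> t)"
  assumes NL: "NL f g C \<xi>" and NS: "NS f g \<beta>"
    and L: "L0 \<ge> 0" "L1 \<ge> 0" "\<not> (L0 = 0 \<and> L1 = 0)"
    and beta_bound: "\<And>x. \<delta> x > 0 \<Longrightarrow>
        \<beta> x \<le> L0 * (norm (g x))\<^sup>2 / \<delta> x powr (2 - 2 * \<xi>) + L1 * norm (g x)"
    and GNGD: "\<And>t. t \<ge> 1 \<Longrightarrow> \<theta> (Suc t) = \<theta> t - (1 / \<beta> (\<theta> t)) *\<^sub>R g (\<theta> t)"
    and pos: "\<And>t. t \<ge> 1 \<Longrightarrow> \<delta> (\<theta> t) > 0"
    and Cpos: "Cinf > 0"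
    and t: "t \<ge> 1"
  shows "\<delta> (\<theta> (Suc t)) \<le> \<delta> (\<theta> t)
    - 1/2 * inverse (L0 + L1 * \<delta> (\<theta> 1) powr (1 - \<xi>) / Cinf) * \<delta> (\<theta> t) powr (2 - 2 * \<xi>)"
proof -
  have below_start: "\<delta> (\<theta> t) \<le> \<delta> (\<theta> 1)"
    using t
  proof (induction t rule: dec_induct)
    case (step n)
    then show ?case
      using GNGD_descent[OF NS GNGD[of n]] by (simp add: \<delta>_def)
  qed simp
  have "bdd_below ((\<lambda>t. C (\<theta> t)) ` {1..})"
    using NL unfolding NL_def by (intro bdd_belowI2[of _ 0]) (simp add: less_imp_le)
  then have "Cinf \<le> C (\<theta> t)"
    unfolding Cinf_def using t by (intro cINF_lower) auto
  moreover have "\<beta> (\<theta> t) \<le> L0 * (norm (g (\<theta> t)))\<^sup>2 / \<delta> (\<theta> t) powr (2 - 2 * \<xi>) + L1 * norm (g (\<theta> t))"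
    using beta_bound pos t by blast
  ultimately show ?thesis
    using GNGD_step_decrease[OF NL NS, of "\<theta> t" "\<delta> (\<theta> 1)" Cinf L0 L1] below_start Cpos L
      GNGD[OF t] pos[OF t] by (simp add: \<delta>_def inverse_eq_divide mult.commute)
qed

theorem theorem1:
  fixes f :: "real ^ 'n \<Rightarrow> real" and g :: "real ^ 'n \<Rightarrow> real ^ 'n"
    and \<beta> C :: "real ^ 'n \<Rightarrow> real" and \<theta> :: "nat \<Rightarrow> real ^ 'n"
    and \<xi> L0 L1 :: real
  assumes grad: "\<And>x. GDERIV f x :> g x"
    and bdd: "bdd_below (range f)"
    and xi: "\<xi> \<le> 1/2"
    and L: "L0 \<ge> 0" "L1 \<ge> 0" "\<not> (L0 = 0 \<and> L1 = 0)"
    and NL: "NL f g C \<xi>"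
    and NS: "NS f g \<beta>"
    and beta_bound: "\<And>x. f x - fstar f > 0 \<Longrightarrow>
        \<beta> x \<le> L0 * (norm (g x))\<^sup>2 / (f x - fstar f) powr (2 - 2 * \<xi>) + L1 * norm (g x)"
    and GNGD: "\<And>t. t \<ge> 1 \<Longrightarrow> \<theta> (Suc t) = \<theta> t - (1 / \<beta> (\<theta> t)) *\<^sub>R g (\<theta> t)"
    and pos: "\<And>t. t \<ge> 1 \<Longrightarrow> f (\<theta> t) - fstar f > 0"
    and nz: "\<And>t. t \<ge> 1 \<Longrightarrow> g (\<theta> t) \<noteq> 0"
    and Cpos: "(INF t\<in>{1..}. C (\<theta> t)) > 0"
  shows "(\<forall>t\<ge>1. f (\<theta> (Suc t)) - fstar f \<le> f (\<theta> t) - fstar f) \<and>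
    (let \<delta> = (\<lambda>x. f x - fstar f); Cinf = (INF t\<in>{1..}. C (\<theta> t));
         a = 1/2 * inverse (L0 + L1 * \<delta> (\<theta> 1) powr (1 - \<xi>) / Cinf) in
     (\<xi> < 1/2 \<longrightarrow> (\<forall>t\<ge>1. \<delta> (\<theta> t) \<le>
        (\<delta> (\<theta> 1) powr (-(1 - 2*\<xi>)) + (1 - 2*\<xi>) * a * (real t - 1)) powr (-(1 / (1 - 2*\<xi>))))) \<and>
     (\<xi> = 1/2 \<longrightarrow> (\<forall>t\<ge>1. \<delta> (\<theta> t) \<le>
        exp (- (Cinf * (real t - 1) / (2 * (L0 * Cinf + L1 * \<delta> (\<theta> 1) powr (1/2))))) * \<delta> (\<theta> 1))))"
proof -
  define d where "d t = f (\<theta> t) - fstar f" for t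
  define Cinf where "Cinf = (INF t\<in>{1..}. C (\<theta> t))"
  define K where "K = L0 + L1 * d 1 powr (1 - \<xi>) / Cinf"
  define a where "a = 1/2 * inverse K"
  have d_pos: "d t > 0" if "t \<ge> 1" for t
    using pos[OF that] by (simp add: d_def)
  have K_pos: "K > 0"
    using add_mult_pos_of_not_both_zero[OF L, of "d 1 powr (1 - \<xi>) / Cinf"] d_pos[of 1] Cpos
    by (simp add: K_def Cinf_def)
  have decrease: "d (Suc t) \<le> d t - a * d t powr (2 - 2 * \<xi>)" if "t \<ge> 1" for t
    using GNGD_gap_recursion[OF NL NS L beta_bound GNGD pos Cpos that]
    unfolding d_def a_def K_def Cinf_def .
  have "d (Suc t) \<le> d t - a * d t powr (1 + (1 - 2 * \<xi>))" if "t \<ge> 1" for t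
    using decrease[OF that] by (simp add: diff_add_eq add_diff_eq)
  then have "\<xi> < 1/2 \<Longrightarrow> t \<ge> 1 \<Longrightarrow>
      d t \<le> (d 1 powr (-(1 - 2*\<xi>)) + (1 - 2*\<xi>) * a * (real t - 1)) powr (-(1 / (1 - 2*\<xi>)))" for t
    using polynomial_decrease_rate[of d a "1 - 2 * \<xi>" t] d_pos K_pos by (simp add: a_def)
  moreover have "d t \<le> exp (- (Cinf * (real t - 1) / (2 * (L0 * Cinf + L1 * d 1 powr (1/2))))) * d 1"
    if xi_half: "\<xi> = 1/2" and t: "t \<ge> 1" for t
  proof -
    have half: "1 - \<xi> = 1/2"
      using xi_half by simp
    have "Cinf * (real t - 1) / (2 * (L0 * Cinf + L1 * d 1 powr (1/2))) = a * (real t - 1)"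
      using Cpos K_pos unfolding a_def K_def half Cinf_def[symmetric] by (simp add: field_simps)
    moreover have "d (Suc s) \<le> d s - a * d s" if "s \<ge> 1" for s
      using decrease[OF that] d_pos[OF that] xi_half by simp
    ultimately show ?thesis
      using geometric_decrease_rate[of d a t] d_pos t by simp
  qed
  moreover have "t \<ge> 1 \<Longrightarrow> d (Suc t) \<le> d t" for t
    using GNGD_descent[OF NS GNGD[of t]] by (simp add: d_def)
  ultimately show ?thesis
    unfolding Let_def d_def a_def K_def Cinf_def by simp
qed

end
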